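(* Let $Q$ be a finite set of item collections; for each $q\in Q$ let $n_q\ge 1$ be the number of items in $q$. On a probability space, let there be, for each $q\in Q$ and $i\in\{1,\ldots,n_q\}$, random variables: a feature vector $x_{q,i}$, a relevance indicator $r_{q,i}\in\{0,1\}$, an examination indicator $e_{q,i}\in\{0,1\}$, and a target (click) label $c_{q,i}\in\{0,1\}$. Let $\mathcal{I}_q=\{r_{q,1},\ldots,r_{q,n_q},x_{q,1},\ldots,x_{q,n_q}\}$ and define the conditional examination probabilities $$p_{q,i}=P\{e_{q,i}=1\mid \mathcal{I}_q\},\qquad p_{q,i,j}=P\{e_{q,i}e_{q,j}=1\mid \mathcal{I}_q\},\quad i,j\in\{1,\ldots,n_q\}.$$ Assume: (1) (examination hypothesis) $c_{q,i}=e_{q,i}\, r_{q,i}$ for all $q\in Q$ and all $i=1,\ldots,n_q$; (2) (positivity) $p_{q,i}>0$ and $p_{q,i,j}>0$ for all $q\in Q$ and all $i,j=1,\ldots,n_q$. Let $f$ be a (deterministic) ranking model mapping feature vectors to real scores, and let $\ell_{1,1},\ell_{1,0},\ell_{0,1},\ell_{0,0}$ be real-valued functions of two real scores. Set $$\mathbf{z}(u,v)=\big(\ell_{1,1}(u,v),\ \ell_{1,0}(u,v),\ \ell_{0,1}(u,v),\ \ell_{0,0}(u,v)\big)^{\mathsf T},\qquad \mathbf{s}(b_1,b_2)=\big(b_1b_2,\ b_1(1-b_2),\ (1-b_1)b_2,\ (1-b_1)(1-b_2)\big)^{\mathsf T}$$ for $b_1,b_2\in\{0,1\}$. With $a_{q,i}=1/p_{q,i}$,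 $a_{q,j}=1/p_{q,j}$, $a_{q,i,j}=1/p_{q,i,j}$, define the $4\times 4$ matrix $$\mathbf{A}_{q,i,j}=\begin{pmatrix} a_{q,i,j} & 0 & 0 & 0\\ a_{q,i}-a_{q,i,j} & a_{q,i} & 0 & 0\\ a_{q,j}-a_{q,i,j} & 0 & a_{q,j} & 0\\ 1-a_{q,i}-a_{q,j}+a_{q,i,j} & 1-a_{q,i} & 1-a_{q,j} & 1\end{pmatrix},$$ and the loss $$L_u=\sum_{q\in Q}\sum_{i,j=1}^{n_q}\mathbf{z}\big(f(x_{q,i}),f(x_{q,j})\big)^{\mathsf T}\,\mathbf{A}_{q,i,j}\,\mathbf{s}(c_{q,i},c_{q,j}).$$ Then $L_u$ is unbiased, i.e. $$\mathrm{E}[L_u]=\mathrm{E}\left[\sum_{q\in Q}\sum_{i,j=1}^{n_q}\mathbf{z}\big(f(x_{q,i}),f(x_{q,j})\big)^{\mathsf T}\,\mathbf{s}(r_{q,i},r_{q,j})\right].$$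
   Context: This is the setting of pairwise learning-to-rank with position bias: $r_{q,i}$ is the (unobserved) true relevance of the $i$-th item of collection $q$, $e_{q,i}$ indicates whether the user examined it, and $c_{q,i}$ is the observed implicit-feedback label (e.g. a click). The examination indicators of different items need not be independent, and examination need not be independent of relevance. All expectations appearing in the statement are assumed to exist (be finite). *)

theory Defs
  imports "HOL-Probability.Probability"
begin

definition info_sigma ::
  "'w measure \<Rightarrow> 'f measure \<Rightarrow> (nat \<Rightarrow> 'w \<Rightarrow> 'f) \<Rightarrow> (nat \<Rightarrow> 'w \<Rightarrow> real) \<Rightarrow> nat \<Rightarrow> 'w measure" where
  "info_sigma M Nx x r n =
     sigma (space M)
       (\<Union>i\<in>{1..n}. {x i -` A \<inter> space M | A. A \<in> sets Nx}
                  \<union> {r i -` B \<inter> space M | B. B \<in> sets (borel :: real measure)})"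

definition zvec :: "(real \<Rightarrow> real \<Rightarrow> real) \<Rightarrow> (real \<Rightarrow> real \<Rightarrow> real) \<Rightarrow>
    (real \<Rightarrow> real \<Rightarrow> real) \<Rightarrow> (real \<Rightarrow> real \<Rightarrow> real) \<Rightarrow> real \<Rightarrow> real \<Rightarrow> real^4" where
  "zvec l11 l10 l01 l00 u v = vector [l11 u v, l10 u v, l01 u v, l00 u v]"

definition svec :: "real \<Rightarrow> real \<Rightarrow> real^4" where
  "svec b1 b2 = vector [b1 * b2, b1 * (1 - b2), (1 - b1) * b2, (1 - b1) * (1 - b2)]"

definition Amat :: "real \<Rightarrow> real \<Rightarrow> real \<Rightarrow> real^4^4" where
  "Amat ai aj aij = vector [
      vector [aij, 0, 0, 0],
      vector [ai - aij, ai, 0, 0],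
      vector [aj - aij, 0, aj, 0],
      vector [1 - ai - aj + aij, 1 - ai, 1 - aj, 1]]"

end

theory Submission
  imports Defs
begin

(* The vector svec b1 b2 is an affine function of the moments (b1, b2, b1 b2), and the matrix
   A_{q,i,j} acts on these moment coordinates diagonally, multiplying them by a_i, a_j and a_ij.
   Under c = e r the debiased pair term is therefore affine in e_i, e_j and e_i e_j, with
   coefficients measurable with respect to the information sigma-algebra I_q. Conditioning on I_q
   replaces these by p_i, p_j and p_ij, which cancel the inverse propensities and leave the
   relevance term. The coefficients need not be integrable, so the tower property is applied on
   the sets where they are bounded and the truncation is removed by dominated convergence. *)

lemma vector_4 [simp]:
  "(vector [a, b, c, d] :: ('a::zero)^4) $ 1 = a"
  "(vector [a, b, c, d] :: ('a::zero)^4) $ 2 = b"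
  "(vector [a, b, c, d] :: ('a::zero)^4) $ 3 = c"
  "(vector [a, b, c, d] :: ('a::zero)^4) $ 4 = d"
  unfolding vector_def by simp_all

(* For binary b1 b2 with E b1 = t1, E b2 = t2, E (b1 b2) = t12 this is the expectation of
   svec b1 b2, i.e. the distribution of the outcome pattern (11, 10, 01, 00). *)
definition moment_svec :: "real \<Rightarrow> real \<Rightarrow> real \<Rightarrow> real^4" where
  "moment_svec t1 t2 t12 = vector [t12, t1 - t12, t2 - t12, 1 - t1 - t2 + t12]"

lemma svec_eq_moment_svec: "svec b1 b2 = moment_svec b1 b2 (b1 * b2)"
  by (simp add: svec_def moment_svec_def vec_eq_iff forall_4 algebra_simps)

lemma inner_moment_svec:
  "z \<bullet> moment_svec t1 t2 t12 =
     z$4 + t1 * (z$2 - z$4) + t2 * (z$3 - z$4) + t12 * (z$1 - z$2 - z$3 + z$4)"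
  by (simp add: moment_svec_def inner_vec_def sum_4 algebra_simps)

lemma Amat_mult_svec:
  "Amat a1 a2 a12 *v svec b1 b2 = moment_svec (a1 * b1) (a2 * b2) (a12 * (b1 * b2))"
  unfolding vec_eq_iff forall_4
  by (simp add: Amat_def svec_def moment_svec_def matrix_vector_mult_def sum_4)
    (simp add: algebra_simps)

lemma borel_measurable_uncurried_compose:
  fixes l :: "real \<Rightarrow> real \<Rightarrow> real"
  assumes "(\<lambda>(u, v). l u v) \<in> borel_measurable borel"
    and "f \<in> borel_measurable M" "g \<in> borel_measurable M"
  shows "(\<lambda>\<omega>. l (f \<omega>) (g \<omega>)) \<in> borel_measurable M"
proof -
  have "(\<lambda>(u, v). l u v) \<in> borel_measurable (borel \<Otimes>\<^sub>M borel)"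
    using assms(1) by (simp add: borel_prod)
  from measurable_compose[OF measurable_Pair[OF assms(2,3)] this] show ?thesis
    by simp
qed

lemma borel_measurable_zvec_nth:
  assumes "(\<lambda>(u, v). l11 u v) \<in> borel_measurable borel" "(\<lambda>(u, v). l10 u v) \<in> borel_measurable borel"
    "(\<lambda>(u, v). l01 u v) \<in> borel_measurable borel" "(\<lambda>(u, v). l00 u v) \<in> borel_measurable borel"
    and "f \<in> borel_measurable M" "g \<in> borel_measurable M"
  shows "(\<lambda>\<omega>. zvec l11 l10 l01 l00 (f \<omega>) (g \<omega>) $ k) \<in> borel_measurable M"
  using exhaust_4[of k] assms
  by (auto simp: zvec_def intro: borel_measurable_uncurried_compose)

lemma integral_sum_sum_sum:
  fixes F :: "'q \<Rightarrow> 'i \<Rightarrow> 'i \<Rightarrow> 'a \<Rightarrow> real"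
  assumes "\<And>q i j. q \<in> Q \<Longrightarrow> i \<in> I q \<Longrightarrow> j \<in> I q \<Longrightarrow> integrable M (F q i j)"
  shows "(\<integral>\<omega>. (\<Sum>q\<in>Q. \<Sum>i\<in>I q. \<Sum>j\<in>I q. F q i j \<omega>) \<partial>M) =
         (\<Sum>q\<in>Q. \<Sum>i\<in>I q. \<Sum>j\<in>I q. integral\<^sup>L M (F q i j))"
  using assms by (simp add: Bochner_Integration.integral_sum Bochner_Integration.integrable_sum)

lemma integrable_inner_vec:
  fixes u v :: "'a \<Rightarrow> real^'n"
  assumes "\<And>k. integrable M (\<lambda>\<omega>. u \<omega> $ k * v \<omega> $ k)"
  shows "integrable M (\<lambda>\<omega>. u \<omega> \<bullet> v \<omega>)"
  unfolding inner_vec_def inner_real_def by (rule Bochner_Integration.integrable_sum) (rule assms)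

lemma
  fixes M :: "'a measure"
  assumes x: "\<And>i. i \<in> {1..n} \<Longrightarrow> x i \<in> measurable M Nx"
    and r: "\<And>i. i \<in> {1..n} \<Longrightarrow> r i \<in> borel_measurable M"
  shows subalgebra_info_sigma: "subalgebra M (info_sigma M Nx x r n)"
    and measurable_info_sigma_x: "\<And>i. i \<in> {1..n} \<Longrightarrow> x i \<in> measurable (info_sigma M Nx x r n) Nx"
    and measurable_info_sigma_r: "\<And>i. i \<in> {1..n} \<Longrightarrow> r i \<in> borel_measurable (info_sigma M Nx x r n)"
proof -
  define G where "G = (\<Union>i\<in>{1..n}. {x i -` A \<inter> space M | A. A \<in> sets Nx}
                  \<union> {r i -` B \<inter> space M | B. B \<in> sets (borel :: real measure)})"
  have G_Pow: "G \<subseteq> Pow (space M)"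
    unfolding G_def by auto
  have space: "space (info_sigma M Nx x r n) = space M"
    unfolding info_sigma_def G_def[symmetric] by (simp add: space_measure_of_conv)
  have sets: "sets (info_sigma M Nx x r n) = sigma_sets (space M) G"
    unfolding info_sigma_def G_def[symmetric] using G_Pow by simp
  have "G \<subseteq> sets M"
    unfolding G_def using x r by (auto simp: measurable_sets)
  then show "subalgebra M (info_sigma M Nx x r n)"
    unfolding subalgebra_def space sets by (simp add: sets.sigma_sets_subset)
  show "x i \<in> measurable (info_sigma M Nx x r n) Nx" if i: "i \<in> {1..n}" for i
  proof (rule measurableI)
    show "x i \<omega> \<in> space Nx" if "\<omega> \<in> space (info_sigma M Nx x r n)" for \<omega>
      using that measurable_space[OF x[OF i]] unfolding space by blast
    show "x i -` A \<inter> space (info_sigma M Nx x r n) \<in> sets (info_sigma M Nx x r n)"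
      if "A \<in> sets Nx" for A
      unfolding space sets using that i by (intro sigma_sets.Basic) (unfold G_def, blast)
  qed
  show "r i \<in> borel_measurable (info_sigma M Nx x r n)" if i: "i \<in> {1..n}" for i
  proof (rule measurableI)
    show "r i -` B \<inter> space (info_sigma M Nx x r n) \<in> sets (info_sigma M Nx x r n)"
      if "B \<in> sets borel" for B
      unfolding space sets using that i by (intro sigma_sets.Basic) (unfold G_def, blast)
  qed simp
qed

lemma integral_eq_by_exhaustion:
  fixes Y Z :: "'a \<Rightarrow> real"
  assumes A: "\<And>N. A N \<in> sets M" "incseq A" "(\<Union>N. A N) = space M"
    and "integrable M Y" "integrable M Z"
    and eq: "\<And>N. (\<integral>\<omega>\<in>A N. Y \<omega> \<partial>M) = (\<integral>\<omega>\<in>A N. Z \<omega> \<partial>M)"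
  shows "integral\<^sup>L M Y = integral\<^sup>L M Z"
proof -
  have lim: "(\<lambda>N. \<integral>\<omega>\<in>A N. W \<omega> \<partial>M) \<longlonglongrightarrow> integral\<^sup>L M W" if "integrable M W" for W :: "'a \<Rightarrow> real"
  proof -
    have "set_integrable M (\<Union>N. A N) W"
      unfolding A(3) set_integrable_def by (rule integrable_mult_indicator[OF sets.top that])
    from set_integral_cont_up[OF A(1,2) this] show ?thesis
      unfolding A(3) set_integral_space[OF that] .
  qed
  show ?thesis
    using lim[OF assms(4)] lim[OF assms(5)] unfolding eq by (rule LIMSEQ_unique)
qed

context finite_measure_subalgebra
begin

lemma integral_sum_mult_real_cond_exp:
  fixes U g :: "'i \<Rightarrow> 'a \<Rightarrow> real"
  assumes "finite J"
    and U: "\<And>m. m \<in> J \<Longrightarrow> U m \<in> borel_measurable F"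
    and g: "\<And>m. m \<in> J \<Longrightarrow> g m \<in> borel_measurable M"
    and g_bounded: "\<And>m \<omega>. m \<in> J \<Longrightarrow> \<omega> \<in> space M \<Longrightarrow> \<bar>g m \<omega>\<bar> \<le> B"
    and integrable: "integrable M (\<lambda>\<omega>. \<Sum>m\<in>J. U m \<omega> * g m \<omega>)"
      "integrable M (\<lambda>\<omega>. \<Sum>m\<in>J. U m \<omega> * real_cond_exp M F (g m) \<omega>)"
  shows "(\<integral>\<omega>. (\<Sum>m\<in>J. U m \<omega> * g m \<omega>) \<partial>M) =
         (\<integral>\<omega>. (\<Sum>m\<in>J. U m \<omega> * real_cond_exp M F (g m) \<omega>) \<partial>M)"
proof -
  define A where "A N = {\<omega> \<in> space M. (\<Sum>m\<in>J. \<bar>U m \<omega>\<bar>) \<le> real N}" for N :: nat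
  have A_F: "A N \<in> sets F" for N
  proof -
    have "(\<lambda>\<omega>. \<Sum>m\<in>J. \<bar>U m \<omega>\<bar>) \<in> borel_measurable F"
      using U by measurable
    then show ?thesis
      unfolding A_def subalg[THEN subalgebra_def[THEN iffD1], THEN conjunct1, symmetric] by measurable
  qed
  have A_M: "A N \<in> sets M" for N
    using A_F subalg by (auto simp: subalgebra_def)
  have "incseq A"
    by (auto simp: incseq_def A_def intro: order_trans)
  have "(\<Union>N. A N) = space M"
    by (auto simp: A_def intro: real_nat_ceiling_ge)
  have truncated: "integrable M (\<lambda>\<omega>. V \<omega> * g m \<omega>)"
    "integrable M (\<lambda>\<omega>. V \<omega> * real_cond_exp M F (g m) \<omega>)"
    "(\<integral>\<omega>. V \<omega> * g m \<omega> \<partial>M) = (\<integral>\<omega>. V \<omega> * real_cond_exp M F (g m) \<omega> \<partial>M)"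
    if "m \<in> J" and V: "V = (\<lambda>\<omega>. indicator (A N) \<omega> * U m \<omega>)" for m N V
  proof -
    have V_F [measurable]: "V \<in> borel_measurable F" and [measurable]: "g m \<in> borel_measurable M"
      using that A_F U g by auto
    have [measurable]: "V \<in> borel_measurable M"
      using V_F by (rule measurable_from_subalg[OF subalg])
    have "\<bar>V \<omega>\<bar> \<le> real N" for \<omega>
      using member_le_sum[of m J "\<lambda>m. \<bar>U m \<omega>\<bar>"] \<open>m \<in> J\<close> \<open>finite J\<close>
      by (auto simp: V A_def indicator_def)
    then have "\<bar>V \<omega> * g m \<omega>\<bar> \<le> real N * B" if "\<omega> \<in> space M" for \<omega>
      unfolding abs_mult using g_bounded[OF \<open>m \<in> J\<close> that] by (intro mult_mono) auto
    then have "integrable M (\<lambda>\<omega>. V \<omega> * g m \<omega>)"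
      by (intro integrable_const_bound[where B="real N * B"]) auto
    then show "integrable M (\<lambda>\<omega>. V \<omega> * g m \<omega>)"
      "integrable M (\<lambda>\<omega>. V \<omega> * real_cond_exp M F (g m) \<omega>)"
      "(\<integral>\<omega>. V \<omega> * g m \<omega> \<partial>M) = (\<integral>\<omega>. V \<omega> * real_cond_exp M F (g m) \<omega> \<partial>M)"
      by (simp_all add: real_cond_exp_intg)
  qed
  have "(\<integral>\<omega>\<in>A N. (\<Sum>m\<in>J. U m \<omega> * g m \<omega>) \<partial>M) =
        (\<integral>\<omega>\<in>A N. (\<Sum>m\<in>J. U m \<omega> * real_cond_exp M F (g m) \<omega>) \<partial>M)" for N
    using truncated[OF _ refl, of _ N]
    by (simp add: set_lebesgue_integral_def sum_distrib_left mult.assoc)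
  then show ?thesis
    by (rule integral_eq_by_exhaustion[OF A_M \<open>incseq A\<close> \<open>(\<Union>N. A N) = space M\<close> integrable])
qed

lemma integral_inner_Amat_svec_unbiased:
  fixes z :: "'a \<Rightarrow> real^4" and b1 b2 e1 e2 c1 c2 :: "'a \<Rightarrow> real"
  defines "p1 \<equiv> real_cond_exp M F e1" and "p2 \<equiv> real_cond_exp M F e2"
    and "p12 \<equiv> real_cond_exp M F (\<lambda>\<omega>. e1 \<omega> * e2 \<omega>)"
  assumes z [measurable]: "\<And>k. (\<lambda>\<omega>. z \<omega> $ k) \<in> borel_measurable F"
    and b [measurable]: "b1 \<in> borel_measurable F" "b2 \<in> borel_measurable F"
    and e [measurable]: "e1 \<in> borel_measurable M" "e2 \<in> borel_measurable M"
    and e_bounded: "\<And>\<omega>. \<omega> \<in> space M \<Longrightarrow> \<bar>e1 \<omega>\<bar> \<le> 1" "\<And>\<omega>. \<omega> \<in> space M \<Longrightarrow> \<bar>e2 \<omega>\<bar> \<le> 1"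
    and c: "\<And>\<omega>. \<omega> \<in> space M \<Longrightarrow> c1 \<omega> = e1 \<omega> * b1 \<omega>"
      "\<And>\<omega>. \<omega> \<in> space M \<Longrightarrow> c2 \<omega> = e2 \<omega> * b2 \<omega>"
    and pos: "AE \<omega> in M. p1 \<omega> > 0" "AE \<omega> in M. p2 \<omega> > 0" "AE \<omega> in M. p12 \<omega> > 0"
    and integrable:
      "integrable M (\<lambda>\<omega>. z \<omega> \<bullet> (Amat (1 / p1 \<omega>) (1 / p2 \<omega>) (1 / p12 \<omega>) *v svec (c1 \<omega>) (c2 \<omega>)))"
      "integrable M (\<lambda>\<omega>. z \<omega> \<bullet> svec (b1 \<omega>) (b2 \<omega>))"
  shows "(\<integral>\<omega>. z \<omega> \<bullet> (Amat (1 / p1 \<omega>) (1 / p2 \<omega>) (1 / p12 \<omega>) *v svec (c1 \<omega>) (c2 \<omega>)) \<partial>M) =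
         (\<integral>\<omega>. z \<omega> \<bullet> svec (b1 \<omega>) (b2 \<omega>) \<partial>M)"
proof -
  define J :: "nat set" where "J = {0, 1, 2, 3}"
  define g where "g = (!) [\<lambda>_. 1, e1, e2, \<lambda>\<omega>. e1 \<omega> * e2 \<omega>]"
  define U where "U = (!) [\<lambda>\<omega>. z \<omega> $ 4,
    \<lambda>\<omega>. b1 \<omega> * (z \<omega> $ 2 - z \<omega> $ 4) / p1 \<omega>,
    \<lambda>\<omega>. b2 \<omega> * (z \<omega> $ 3 - z \<omega> $ 4) / p2 \<omega>,
    \<lambda>\<omega>. b1 \<omega> * b2 \<omega> * (z \<omega> $ 1 - z \<omega> $ 2 - z \<omega> $ 3 + z \<omega> $ 4) / p12 \<omega>]"
  have sum_J: "(\<Sum>m\<in>J. f m) = f 0 + f 1 + f 2 + f 3" for f :: "nat \<Rightarrow> real"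
    by (simp add: J_def)
  have U_F: "U m \<in> borel_measurable F" if "m \<in> J" for m
    using that unfolding J_def U_def p1_def p2_def p12_def by auto
  have g_M: "g m \<in> borel_measurable M" if "m \<in> J" for m
    using that unfolding J_def g_def by auto
  have g_bounded: "\<bar>g m \<omega>\<bar> \<le> 1" if "m \<in> J" "\<omega> \<in> space M" for m \<omega>
    using that e_bounded[OF \<open>\<omega> \<in> space M\<close>] unfolding J_def g_def by (auto simp: abs_mult intro!: mult_le_one)
  have clicks: "z \<omega> \<bullet> (Amat (1 / p1 \<omega>) (1 / p2 \<omega>) (1 / p12 \<omega>) *v svec (c1 \<omega>) (c2 \<omega>)) =
      (\<Sum>m\<in>J. U m \<omega> * g m \<omega>)" if "\<omega> \<in> space M" for \<omega>
    by (simp add: sum_J U_def g_def Amat_mult_svec inner_moment_svec c[OF that] divide_inverse algebra_simps)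
  have "AE \<omega> in M. real_cond_exp M F (\<lambda>_. 1) \<omega> = 1"
    by (rule real_cond_exp_F_meas) auto
  then have relevance: "AE \<omega> in M. z \<omega> \<bullet> svec (b1 \<omega>) (b2 \<omega>) =
      (\<Sum>m\<in>J. U m \<omega> * real_cond_exp M F (g m) \<omega>)"
    using pos
    by eventually_elim
      (simp add: sum_J U_def g_def svec_eq_moment_svec inner_moment_svec
        flip: p1_def p2_def p12_def)
  have sum_cond_exp_M: "(\<lambda>\<omega>. \<Sum>m\<in>J. U m \<omega> * real_cond_exp M F (g m) \<omega>) \<in> borel_measurable M"
    using U_F measurable_from_subalg[OF subalg] by (intro borel_measurable_sum borel_measurable_times) auto
  have "(\<integral>\<omega>. z \<omega> \<bullet> (Amat (1 / p1 \<omega>) (1 / p2 \<omega>) (1 / p12 \<omega>) *v svec (c1 \<omega>) (c2 \<omega>)) \<partial>M) =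
      (\<integral>\<omega>. (\<Sum>m\<in>J. U m \<omega> * g m \<omega>) \<partial>M)"
    by (rule Bochner_Integration.integral_cong[OF refl clicks])
  also have "\<dots> = (\<integral>\<omega>. (\<Sum>m\<in>J. U m \<omega> * real_cond_exp M F (g m) \<omega>) \<partial>M)"
  proof (rule integral_sum_mult_real_cond_exp[OF _ U_F g_M g_bounded])
    show "integrable M (\<lambda>\<omega>. \<Sum>m\<in>J. U m \<omega> * g m \<omega>)"
      using integrable(1) by (simp add: clicks cong: Bochner_Integration.integrable_cong)
    show "integrable M (\<lambda>\<omega>. \<Sum>m\<in>J. U m \<omega> * real_cond_exp M F (g m) \<omega>)"
      by (rule integrable_cong_AE_imp[OF integrable(2) sum_cond_exp_M relevance])
  qed (simp add: J_def)
  also have "\<dots> = (\<integral>\<omega>. z \<omega> \<bullet> svec (b1 \<omega>) (b2 \<omega>) \<partial>M)"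
    using relevance sum_cond_exp_M integrable(2) by (intro integral_cong_AE) auto
  finally show ?thesis .
qed

end

theorem theorem1:
  fixes M :: "'w measure" and Nx :: "'f measure"
    and Q :: "'q set" and n :: "'q \<Rightarrow> nat"
    and x :: "'q \<Rightarrow> nat \<Rightarrow> 'w \<Rightarrow> 'f"
    and r e c :: "'q \<Rightarrow> nat \<Rightarrow> 'w \<Rightarrow> real"
    and f :: "'f \<Rightarrow> real"
    and l11 l10 l01 l00 :: "real \<Rightarrow> real \<Rightarrow> real"
  defines "p \<equiv> \<lambda>q i. real_cond_exp M (info_sigma M Nx (x q) (r q) (n q)) (e q i)"
    and "p2 \<equiv> \<lambda>q i j. real_cond_exp M (info_sigma M Nx (x q) (r q) (n q)) (\<lambda>\<omega>. e q i \<omega> * e q j \<omega>)"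
    and "Tterm \<equiv> \<lambda>q i j \<omega>. zvec l11 l10 l01 l00 (f (x q i \<omega>)) (f (x q j \<omega>)) \<bullet>
            svec (r q i \<omega>) (r q j \<omega>)"
  assumes "prob_space M"
    and "finite Q"
    and "\<And>q. q \<in> Q \<Longrightarrow> n q \<ge> 1"
    and "\<And>q i. q \<in> Q \<Longrightarrow> i \<in> {1..n q} \<Longrightarrow> x q i \<in> measurable M Nx"
    and "\<And>q i. q \<in> Q \<Longrightarrow> i \<in> {1..n q} \<Longrightarrow> r q i \<in> borel_measurable M"
    and "\<And>q i. q \<in> Q \<Longrightarrow> i \<in> {1..n q} \<Longrightarrow> e q i \<in> borel_measurable M"
    and "\<And>q i. q \<in> Q \<Longrightarrow> i \<in> {1..n q} \<Longrightarrow> c q i \<in> borel_measurable M"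
    and "\<And>q i \<omega>. q \<in> Q \<Longrightarrow> i \<in> {1..n q} \<Longrightarrow> \<omega> \<in> space M \<Longrightarrow> r q i \<omega> \<in> {0, 1}"
    and "\<And>q i \<omega>. q \<in> Q \<Longrightarrow> i \<in> {1..n q} \<Longrightarrow> \<omega> \<in> space M \<Longrightarrow> e q i \<omega> \<in> {0, 1}"
    and "\<And>q i \<omega>. q \<in> Q \<Longrightarrow> i \<in> {1..n q} \<Longrightarrow> \<omega> \<in> space M \<Longrightarrow> c q i \<omega> \<in> {0, 1}"
    and "f \<in> borel_measurable Nx"
    and "(\<lambda>(u, v). l11 u v) \<in> borel_measurable borel"
    and "(\<lambda>(u, v). l10 u v) \<in> borel_measurable borel"
    and "(\<lambda>(u, v). l01 u v) \<in> borel_measurable borel"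
    and "(\<lambda>(u, v). l00 u v) \<in> borel_measurable borel"
    \<comment> \<open>(1) examination hypothesis\<close>
    and "\<And>q i \<omega>. q \<in> Q \<Longrightarrow> i \<in> {1..n q} \<Longrightarrow> \<omega> \<in> space M \<Longrightarrow> c q i \<omega> = e q i \<omega> * r q i \<omega>"
    \<comment> \<open>(2) positivity\<close>
    and "\<And>q i. q \<in> Q \<Longrightarrow> i \<in> {1..n q} \<Longrightarrow> AE \<omega> in M. p q i \<omega> > 0"
    and "\<And>q i j. q \<in> Q \<Longrightarrow> i \<in> {1..n q} \<Longrightarrow> j \<in> {1..n q} \<Longrightarrow> AE \<omega> in M. p2 q i j \<omega> > 0"
    \<comment> \<open>existence of the expectations involved (componentwise)\<close>
    and "\<And>q i j k. q \<in> Q \<Longrightarrow> i \<in> {1..n q} \<Longrightarrow> j \<in> {1..n q} \<Longrightarrow>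
           integrable M (\<lambda>\<omega>. zvec l11 l10 l01 l00 (f (x q i \<omega>)) (f (x q j \<omega>)) $ k *
             (Amat (1 / p q i \<omega>) (1 / p q j \<omega>) (1 / p2 q i j \<omega>) *v svec (c q i \<omega>) (c q j \<omega>)) $ k)"
    and "\<And>q i j k. q \<in> Q \<Longrightarrow> i \<in> {1..n q} \<Longrightarrow> j \<in> {1..n q} \<Longrightarrow>
           integrable M (\<lambda>\<omega>. zvec l11 l10 l01 l00 (f (x q i \<omega>)) (f (x q j \<omega>)) $ k *
             svec (r q i \<omega>) (r q j \<omega>) $ k)"
  shows "(\<integral>\<omega>. (\<Sum>q\<in>Q. \<Sum>i\<in>{1..n q}. \<Sum>j\<in>{1..n q}. zvec l11 l10 l01 l00 (f (x q i \<omega>)) (f (x q j \<omega>)) \<bullet>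
            (Amat (1 / p q i \<omega>) (1 / p q j \<omega>) (1 / p2 q i j \<omega>) *v svec (c q i \<omega>) (c q j \<omega>))) \<partial>M)
       = (\<integral>\<omega>. (\<Sum>q\<in>Q. \<Sum>i\<in>{1..n q}. \<Sum>j\<in>{1..n q}. Tterm q i j \<omega>) \<partial>M)"
proof -
  interpret prob_space M by fact
  have integrable_clicks: "integrable M (\<lambda>\<omega>. zvec l11 l10 l01 l00 (f (x q i \<omega>)) (f (x q j \<omega>)) \<bullet>
        (Amat (1 / p q i \<omega>) (1 / p q j \<omega>) (1 / p2 q i j \<omega>) *v svec (c q i \<omega>) (c q j \<omega>)))"
    and integrable_relevance: "integrable M (Tterm q i j)"
    if "q \<in> Q" "i \<in> {1..n q}" "j \<in> {1..n q}" for q i j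
    using assms(22,23)[OF that] unfolding Tterm_def by (auto intro: integrable_inner_vec)
  have pair: "(\<integral>\<omega>. zvec l11 l10 l01 l00 (f (x q i \<omega>)) (f (x q j \<omega>)) \<bullet>
        (Amat (1 / p q i \<omega>) (1 / p q j \<omega>) (1 / p2 q i j \<omega>) *v svec (c q i \<omega>) (c q j \<omega>)) \<partial>M) =
      (\<integral>\<omega>. Tterm q i j \<omega> \<partial>M)"
    if q: "q \<in> Q" and ij: "i \<in> {1..n q}" "j \<in> {1..n q}" for q i j
  proof -
    define G where "G = info_sigma M Nx (x q) (r q) (n q)"
    have x_M: "\<And>k. k \<in> {1..n q} \<Longrightarrow> x q k \<in> measurable M Nx"
      and r_M: "\<And>k. k \<in> {1..n q} \<Longrightarrow> r q k \<in> borel_measurable M"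
      using assms(7,8) q by auto
    interpret finite_measure_subalgebra M G
      using subalgebra_info_sigma[OF x_M r_M] unfolding G_def by unfold_locales auto
    have fx_G: "(\<lambda>\<omega>. f (x q k \<omega>)) \<in> borel_measurable G" if "k \<in> {1..n q}" for k
      using measurable_info_sigma_x[OF x_M r_M that] assms(14) unfolding G_def by measurable
    have r_G: "r q k \<in> borel_measurable G" if "k \<in> {1..n q}" for k
      using measurable_info_sigma_r[OF x_M r_M that] unfolding G_def .
    have e_bounded: "\<bar>e q k \<omega>\<bar> \<le> 1" if "k \<in> {1..n q}" "\<omega> \<in> space M" for k \<omega>
      using assms(12)[OF q that] by auto
    show ?thesis
      using assms(9,19-21)[OF q] ij integrable_clicks[OF q ij] integrable_relevance[OF q ij] r_G e_bounded
      unfolding p_def p2_def Tterm_def G_def[symmetric]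
      by (intro integral_inner_Amat_svec_unbiased borel_measurable_zvec_nth[OF assms(15-18)] fx_G) auto
  qed
  show ?thesis
    using integrable_clicks integrable_relevance pair by (subst (1 2) integral_sum_sum_sum) auto
qed

end
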